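(* Consider an execution of algorithm $\mathcal{A}_3$ (described in the context) in an asynchronous shared-memory system of $n$ processes in which up to $t$ processes, with $n > 2t$, may crash. Let $p_i$ be a correct process that decides a value $v \ne \bot$. Then every correct process $p_j$ whose snapshot $X_j$ is strictly contained in $X_i$ does not decide $\bot$.
   Context: Model: processes communicate through an atomic snapshot object $S$ with one entry per process (initially all $\bot$), supporting $\mathrm{update}(m)$ (process $p_i$ writes $m$ into its own entry) and $\mathrm{snapshot}()$ (returns the vector of all entries), both atomic (linearizable); consequently any two snapshots returned are ordered by inclusion of their sets of non-$\bot$ entries. Asynchronous: no timing bounds. A crashed process stops taking steps; a correct process never crashes. Algorithm $\mathcal{A}_3$, code of $p_i$ with initial value $m$: $p_i$ performs $S.\mathrm{update}(m)$, then repeatedly calls $L_i := S.\mathrm{snapshot}()$ until $L_i$ has at least $n-t$ non-$\bot$ entries; it sets $X_i := L_i$ and $x_i :=$ number of non-$\bot$ entries of $X_i$. If at least $x_i - t$ entries of $X_i$ equal $m$, it decides $m$; else, if some value $v$ has at least $x_i - t$ entries in $X_i$ equal to it, it decides such a $v$; else it decides $\bot$. *)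

theory Defs
  imports Main
begin

text \<open>Processes are 0..n-1. The atomic snapshot
object S is a memory vector (None = bottom). A (possibly infinite) execution is
determined by a schedule: at time s, process sched s takes one atomic step.
A process crashes iff it is scheduled only finitely often.\<close>

type_synonym 'v snap = "nat \<Rightarrow> 'v option"

datatype 'v phase = Init | Scanning | Done "'v snap"

record 'v state =
  mem :: "'v snap"
  phs :: "nat \<Rightarrow> 'v phase"

definition nonbot_count :: "nat \<Rightarrow> 'v snap \<Rightarrow> nat" where
  "nonbot_count n X = card {k. k < n \<and> X k \<noteq> None}"

definition cnt :: "nat \<Rightarrow> 'v snap \<Rightarrow> 'v \<Rightarrow> nat" where
  "cnt n X v = card {k. k < n \<and> X k = Some v}"

definition entries :: "nat \<Rightarrow> 'v snap \<Rightarrow> (nat \<times> 'v) set" where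
  "entries n X = {(k, w). k < n \<and> X k = Some w}"

definition decide3 :: "nat \<Rightarrow> nat \<Rightarrow> 'v \<Rightarrow> 'v snap \<Rightarrow> 'v option" where
  "decide3 n t m X =
     (let x = nonbot_count n X in
      if cnt n X m \<ge> x - t then Some m
      else if \<exists>v. cnt n X v \<ge> x - t then Some (SOME v. cnt n X v \<ge> x - t)
      else None)"

definition snapshot :: "nat \<Rightarrow> 'v snap \<Rightarrow> 'v snap" where
  "snapshot n M = (\<lambda>k. if k < n then M k else None)"

text \<open>One atomic step of process i: update(m_i), or one snapshot() of the repeat loop.\<close>
definition step :: "nat \<Rightarrow> nat \<Rightarrow> (nat \<Rightarrow> 'v) \<Rightarrow> nat \<Rightarrow> 'v state \<Rightarrow> 'v state" where
  "step n t m i s =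
     (case phs s i of
        Init \<Rightarrow> s\<lparr>mem := (mem s)(i := Some (m i)), phs := (phs s)(i := Scanning)\<rparr>
      | Scanning \<Rightarrow>
          (let L = snapshot n (mem s) in
           if nonbot_count n L \<ge> n - t then s\<lparr>phs := (phs s)(i := Done L)\<rparr> else s)
      | Done X \<Rightarrow> s)"

definition init_state :: "'v state" where
  "init_state = \<lparr>mem = (\<lambda>_. None), phs = (\<lambda>_. Init)\<rparr>"

primrec run :: "nat \<Rightarrow> nat \<Rightarrow> (nat \<Rightarrow> 'v) \<Rightarrow> (nat \<Rightarrow> nat) \<Rightarrow> nat \<Rightarrow> 'v state" where
  "run n t m sched 0 = init_state"
| "run n t m sched (Suc k) = step n t m (sched k) (run n t m sched k)"

definition correct :: "(nat \<Rightarrow> nat) \<Rightarrow> nat \<Rightarrow> bool" where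
  "correct sched p = (\<forall>T. \<exists>s\<ge>T. sched s = p)"

end

theory Submission
  imports Defs
begin

text \<open>Only the containment X_j \<subseteq> X_i of the two snapshots matters. An entry of X_i equal
  to w that X_j lacks sits at an index where X_j is bottom but X_i is not, so passing from
  X_i to X_j lowers the number of w-entries by at most x_i - x_j. Hence the value w with
  at least x_i - t entries in X_i that lets p_i decide has at least x_j - t entries in X_j.\<close>

lemma card_add_le_of_Diff_subset:
  assumes "finite A" "finite C" "B \<subseteq> A" "D \<subseteq> C" "A - B \<subseteq> C - D"
  shows "card A + card D \<le> card B + card C"
proof -
  have "card D \<le> card C"
    using assms(2,4) by (simp add: card_mono)
  have "card A = card B + card (A - B)"
    using assms(1,3) by (simp add: card_Diff_subset card_mono finite_subset)
  also have "card (A - B) \<le> card (C - D)"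
    using assms(2,5) by (simp add: card_mono)
  also have "card (C - D) = card C - card D"
    using assms(2,4) by (simp add: card_Diff_subset finite_subset)
  finally show ?thesis
    using \<open>card D \<le> card C\<close> by linarith
qed

lemma entries_subsetD:
  "entries n Y \<subseteq> entries n X \<Longrightarrow> k < n \<Longrightarrow> Y k = Some w \<Longrightarrow> X k = Some w"
  unfolding entries_def by auto

lemma cnt_add_nonbot_count_le:
  assumes "entries n Y \<subseteq> entries n X"
  shows "cnt n X w + nonbot_count n Y \<le> cnt n Y w + nonbot_count n X"
  unfolding cnt_def nonbot_count_def
proof (rule card_add_le_of_Diff_subset)
  show "{k. k < n \<and> Y k = Some w} \<subseteq> {k. k < n \<and> X k = Some w}"
    "{k. k < n \<and> Y k \<noteq> None} \<subseteq> {k. k < n \<and> X k \<noteq> None}"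
    using entries_subsetD[OF assms] by blast+
  show "{k. k < n \<and> X k = Some w} - {k. k < n \<and> Y k = Some w}
    \<subseteq> {k. k < n \<and> X k \<noteq> None} - {k. k < n \<and> Y k \<noteq> None}"
    using entries_subsetD[OF assms] by auto
qed auto

lemma decide3_ne_None_iff:
  "decide3 n t m X \<noteq> None \<longleftrightarrow> (\<exists>w. cnt n X w \<ge> nonbot_count n X - t)"
  unfolding decide3_def Let_def by auto

theorem lemma11:
  fixes n t :: nat and m :: "nat \<Rightarrow> 'v" and sched :: "nat \<Rightarrow> nat"
    and i j ki kj :: nat and Xi Xj :: "'v snap" and v :: 'v
  assumes "n > 2 * t"
    and "\<forall>s. sched s < n"
    and "card {p. p < n \<and> \<not> correct sched p} \<le> t"
    and "i < n" and "j < n"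
    and "correct sched i" and "correct sched j"
    and "phs (run n t m sched ki) i = Done Xi"
    and "decide3 n t (m i) Xi = Some v"
    and "phs (run n t m sched kj) j = Done Xj"
    and "entries n Xj \<subset> entries n Xi"
  shows "decide3 n t (m j) Xj \<noteq> None"
proof -
  from \<open>decide3 n t (m i) Xi = Some v\<close> obtain w
    where "cnt n Xi w \<ge> nonbot_count n Xi - t"
    using decide3_ne_None_iff[of n t "m i" Xi] by auto
  moreover have "cnt n Xi w + nonbot_count n Xj \<le> cnt n Xj w + nonbot_count n Xi"
    using \<open>entries n Xj \<subset> entries n Xi\<close> by (intro cnt_add_nonbot_count_le) auto
  ultimately have "cnt n Xj w \<ge> nonbot_count n Xj - t"
    by linarith
  then show ?thesis
    unfolding decide3_ne_None_iff by blast
qed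

end
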